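(* Let $\Lambda$ be a finitely aligned left cancellative small category. Suppose $\alpha,\beta\in\Lambda$ with $s(\alpha)=s(\beta)$ and $\alpha\beta^*\in S_\Lambda^{\mathrm{Iso}}$, and that $\delta\in\Lambda$ satisfies $\delta\Lambda\subseteq\alpha\Lambda\cap\beta\Lambda$. Then $\delta^*\alpha\beta^*\delta=\bigcup_{i=1}^n\delta_i\alpha_i^*$ for some $\delta_i,\alpha_i\in\Lambda$ such that $\{\delta_i\}_{i=1}^n$ and $\{\alpha_i\}_{i=1}^n$ are exhaustive, and hence $\delta^*\alpha\beta^*\delta\in F_\Lambda$.
   Context: $\Lambda$ is a left cancellative small category (objects $\Lambda^0$, range $r$, source $s$), finitely aligned (each $\alpha\Lambda\cap\beta\Lambda$ is a finite union of $f\Lambda$'s, $\alpha\Lambda=\{\alpha\beta:s(\alpha)=r(\beta)\}$). Each $\alpha\in\Lambda$ is the partial bijection $s(\alpha)\Lambda\to\alpha\Lambda$, $\beta\mapsto\alpha\beta$, in the symmetric inverse monoid $\mathcal{I}(\Lambda)$, with inverse $\alpha^*$; $S_\Lambda$ is the inverse semigroup they generate; $\bigcup$ is union of partial maps. $S_\Lambda^{\mathrm{Iso}}=\{s:ses^*e\neq0\text{ for every idempotent }0\neq e\leqslant s^*s\}$. For $x\in\Lambda^0$, $B\subseteq x\Lambda$ is exhaustive (at $x$) if every $\alpha\in x\Lambda$ has $\alpha\Lambda\cap\beta\Lambda\neq\emptyset$ for some $\beta\in B$. $F_\Lambda=\{\bigcup_{i=1}^n\alpha_i\beta_i^*\in S_\Lambda^{\mathrm{Iso}}:\alpha_i,\beta_i\in\Lambda,\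 \{\alpha_i\},\{\beta_i\}\text{ exhaustive}\}\cup\{0\}$. *)

theory Defs
  imports Main
begin

text \<open>A small category is given by its set of morphisms, its set of objects
(identified with the identity morphisms), range, source and composition.
cmp C a b is the composite a b, defined (meaningful) when sc C a = rg C b.\<close>

record 'a cat =
  Mor :: "'a set"
  Obj :: "'a set"
  rg  :: "'a \<Rightarrow> 'a"
  sc  :: "'a \<Rightarrow> 'a"
  cmp :: "'a \<Rightarrow> 'a \<Rightarrow> 'a"

definition small_category :: "'a cat \<Rightarrow> bool" where
  "small_category C \<longleftrightarrow>
     Obj C \<subseteq> Mor C \<and>
     (\<forall>a\<in>Mor C. rg C a \<in> Obj C \<and> sc C a \<in> Obj C) \<and>
     (\<forall>x\<in>Obj C. rg C x = x \<and> sc C x = x) \<and>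
     (\<forall>a\<in>Mor C. \<forall>b\<in>Mor C. sc C a = rg C b \<longrightarrow>
        cmp C a b \<in> Mor C \<and> rg C (cmp C a b) = rg C a \<and> sc C (cmp C a b) = sc C b) \<and>
     (\<forall>a\<in>Mor C. cmp C (rg C a) a = a \<and> cmp C a (sc C a) = a) \<and>
     (\<forall>a\<in>Mor C. \<forall>b\<in>Mor C. \<forall>c\<in>Mor C. sc C a = rg C b \<longrightarrow> sc C b = rg C c \<longrightarrow>
        cmp C (cmp C a b) c = cmp C a (cmp C b c))"

definition left_cancellative :: "'a cat \<Rightarrow> bool" where
  "left_cancellative C \<longleftrightarrow>
     (\<forall>a\<in>Mor C. \<forall>b\<in>Mor C. \<forall>c\<in>Mor C. sc C a = rg C b \<longrightarrow> sc C a = rg C c \<longrightarrow>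
        cmp C a b = cmp C a c \<longrightarrow> b = c)"

definition rideal :: "'a cat \<Rightarrow> 'a \<Rightarrow> 'a set" where
  "rideal C a = {cmp C a b | b. b \<in> Mor C \<and> sc C a = rg C b}"

definition finitely_aligned :: "'a cat \<Rightarrow> bool" where
  "finitely_aligned C \<longleftrightarrow>
     (\<forall>a\<in>Mor C. \<forall>b\<in>Mor C. \<exists>F. finite F \<and> F \<subseteq> Mor C \<and>
        rideal C a \<inter> rideal C b = (\<Union>f\<in>F. rideal C f))"

text \<open>Partial bijections are partial maps; the product s t of partial maps
is the composition the map composition (apply t first).\<close>

definition pmap :: "'a cat \<Rightarrow> 'a \<Rightarrow> ('a \<rightharpoonup> 'a)" where
  "pmap C a = (\<lambda>g. if g \<in> Mor C \<and> rg C g = sc C a then Some (cmp C a g) else None)"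

definition pinv :: "('a \<rightharpoonup> 'a) \<Rightarrow> ('a \<rightharpoonup> 'a)" where
  "pinv m = (\<lambda>y. if \<exists>x. m x = Some y then Some (SOME x. m x = Some y) else None)"

inductive_set S_Lambda :: "'a cat \<Rightarrow> ('a \<rightharpoonup> 'a) set" for C where
  gen: "a \<in> Mor C \<Longrightarrow> pmap C a \<in> S_Lambda C"
| mult: "s \<in> S_Lambda C \<Longrightarrow> t \<in> S_Lambda C \<Longrightarrow> (s \<circ>\<^sub>m t) \<in> S_Lambda C"
| inv: "s \<in> S_Lambda C \<Longrightarrow> pinv s \<in> S_Lambda C"

definition S_Iso :: "'a cat \<Rightarrow> ('a \<rightharpoonup> 'a) set" where
  "S_Iso C = {s \<in> S_Lambda C. \<forall>e. e \<in> S_Lambda C \<and> e \<circ>\<^sub>m e = e \<and> e \<noteq> Map.empty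
       \<and> e = e \<circ>\<^sub>m (pinv s \<circ>\<^sub>m s) \<longrightarrow> s \<circ>\<^sub>m e \<circ>\<^sub>m pinv s \<circ>\<^sub>m e \<noteq> Map.empty}"

text \<open>Graph of a partial map; unions of partial maps are unions of graphs.\<close>
definition pgraph :: "('a \<rightharpoonup> 'a) \<Rightarrow> ('a \<times> 'a) set" where
  "pgraph m = {(x, y). m x = Some y}"

definition exhaustive_at :: "'a cat \<Rightarrow> 'a \<Rightarrow> 'a set \<Rightarrow> bool" where
  "exhaustive_at C x B \<longleftrightarrow> B \<subseteq> rideal C x \<and>
     (\<forall>a\<in>rideal C x. \<exists>b\<in>B. rideal C a \<inter> rideal C b \<noteq> {})"

definition exhaustive :: "'a cat \<Rightarrow> 'a set \<Rightarrow> bool" where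
  "exhaustive C B \<longleftrightarrow> (\<exists>x\<in>Obj C. exhaustive_at C x B)"

definition F_Lambda :: "'a cat \<Rightarrow> ('a \<rightharpoonup> 'a) set" where
  "F_Lambda C = {m. m \<in> S_Iso C \<and>
     (\<exists>(n::nat) a b. (\<forall>i<n. a i \<in> Mor C \<and> b i \<in> Mor C) \<and>
        exhaustive C (a ` {..<n}) \<and> exhaustive C (b ` {..<n}) \<and>
        pgraph m = (\<Union>i<n. pgraph (pmap C (a i) \<circ>\<^sub>m pinv (pmap C (b i)))))}
   \<union> {Map.empty}"

end

theory Submission
  imports Defs
begin

(* Write delta = alpha a = beta b.  Then delta^* alpha beta^* delta = a^* b, and finite alignment,
   a Lambda \<inter> b Lambda = \<Union>_f f Lambda with f = a p_f = b q_f, turns a^* b into \<Union>_f p_f q_f^*.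
   An element s of S_Lambda lies in S_Lambda^Iso as soon as, for every y in its domain, s maps
   some element of y Lambda into y Lambda: a nonzero idempotent below s^* s fixes some y and hence,
   by right equivariance, all of y Lambda.  Conversely an s in S_Lambda^Iso has this property for
   every d with d Lambda inside its domain, by testing it on the idempotent d d^*.  Taking
   d = delta y shows that delta^* alpha beta^* delta maps some y t' to some y t, for every y with
   r(y) = s(delta).  This gives the isotropy of delta^* alpha beta^* delta, and since (y t', y t) lies
   in the graph of some p_f q_f^*, y Lambda meets both p_f Lambda and q_f Lambda: the families
   {p_f} and {q_f} are exhaustive at s(delta). *)

lemma pinv_SomeD:
  assumes "pinv m y = Some x"
  shows "m x = Some y"
proof -
  have ex: "\<exists>x. m x = Some y" and "x = (SOME x. m x = Some y)"
    using assms unfolding pinv_def by (auto split: if_splits)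
  then show ?thesis using someI_ex[OF ex] by simp
qed

lemma pinv_Some_iff:
  assumes "inj_on m (dom m)"
  shows "pinv m y = Some x \<longleftrightarrow> m x = Some y"
proof
  assume "m x = Some y"
  moreover have "x' = x" if "m x' = Some y" for x'
    using assms that \<open>m x = Some y\<close> by (metis domI inj_onD)
  ultimately have "(SOME x. m x = Some y) = x" by (intro some_equality)
  then show "pinv m y = Some x" using \<open>m x = Some y\<close> unfolding pinv_def by auto
qed (rule pinv_SomeD)

lemma inj_on_domI:
  assumes "\<And>x x' y. m x = Some y \<Longrightarrow> m x' = Some y \<Longrightarrow> x = x'"
  shows "inj_on m (dom m)"
proof (rule inj_onI)
  fix x x' assume "x \<in> dom m" and "m x = m x'"
  then obtain y where "m x = Some y" and "m x' = Some y" by (metis domD)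
  then show "x = x'" by (rule assms)
qed

lemma inj_on_dom_pinv: "inj_on (pinv m) (dom (pinv m))"
  by (rule inj_on_domI) (metis option.inject pinv_SomeD)

lemma inj_on_dom_map_comp:
  assumes "inj_on f (dom f)" and "inj_on g (dom g)"
  shows "inj_on (f \<circ>\<^sub>m g) (dom (f \<circ>\<^sub>m g))"
proof (rule inj_on_domI)
  fix x x' y assume "(f \<circ>\<^sub>m g) x = Some y" "(f \<circ>\<^sub>m g) x' = Some y"
  then obtain z z' where "g x = Some z" "f z = Some y" "g x' = Some z'" "f z' = Some y"
    unfolding map_comp_Some_iff by blast
  with assms show "x = x'" by (metis domI inj_onD)
qed

lemma map_eqI_Some:
  assumes "\<And>x y. f x = Some y \<longleftrightarrow> g x = Some y"
  shows "f = g"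
proof
  fix x show "f x = g x"
  proof (cases "f x")
    case None
    then have "g x \<noteq> Some y" for y using assms[of x y] by simp
    with None show ?thesis by (metis not_Some_eq)
  next
    case (Some y)
    with assms[of x y] show ?thesis by simp
  qed
qed

lemma map_comp_assoc: "f \<circ>\<^sub>m (g \<circ>\<^sub>m h) = f \<circ>\<^sub>m g \<circ>\<^sub>m h"
  by (auto simp: map_comp_def split: option.split)

lemma pinv_comp_self:
  assumes "inj_on s (dom s)"
  shows "(pinv s \<circ>\<^sub>m s) x = (if x \<in> dom s then Some x else None)"
  using assms by (auto simp: map_comp_def pinv_Some_iff split: option.split)

lemma idempotent_map_fixes:
  assumes "inj_on e (dom e)" and "e \<circ>\<^sub>m e = e" and "e x = Some y"
  shows "y = x"
proof -
  have "(e \<circ>\<^sub>m e) x = Some y" using assms(2,3) by simp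
  then have "e y = Some y" using assms(3) by (simp add: map_comp_def)
  with assms(1,3) show ?thesis by (metis domI inj_onD)
qed

lemma map_nonemptyE:
  assumes "m \<noteq> Map.empty"
  obtains x y where "m x = Some y"
  using assms by (metis ext not_None_eq)

locale left_cancellative_category =
  fixes C :: "'a cat"
  assumes small_category: "small_category C" and left_cancellative: "left_cancellative C"
begin

lemma rg_obj: "a \<in> Mor C \<Longrightarrow> rg C a \<in> Obj C"
  and sc_obj: "a \<in> Mor C \<Longrightarrow> sc C a \<in> Obj C"
  and obj_mor: "x \<in> Obj C \<Longrightarrow> x \<in> Mor C"
  and rg_obj_eq: "x \<in> Obj C \<Longrightarrow> rg C x = x"
  and sc_obj_eq: "x \<in> Obj C \<Longrightarrow> sc C x = x"
  using small_category unfolding small_category_def by blast+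

lemma rg_mor [simp]: "a \<in> Mor C \<Longrightarrow> rg C a \<in> Mor C"
  and sc_mor [simp]: "a \<in> Mor C \<Longrightarrow> sc C a \<in> Mor C"
  using rg_obj sc_obj obj_mor by auto

lemma rg_rg [simp]: "a \<in> Mor C \<Longrightarrow> rg C (rg C a) = rg C a"
  and sc_rg [simp]: "a \<in> Mor C \<Longrightarrow> sc C (rg C a) = rg C a"
  and rg_sc [simp]: "a \<in> Mor C \<Longrightarrow> rg C (sc C a) = sc C a"
  and sc_sc [simp]: "a \<in> Mor C \<Longrightarrow> sc C (sc C a) = sc C a"
  using rg_obj sc_obj rg_obj_eq sc_obj_eq by auto

lemma cmp_mor [simp]: "a \<in> Mor C \<Longrightarrow> b \<in> Mor C \<Longrightarrow> sc C a = rg C b \<Longrightarrow> cmp C a b \<in> Mor C"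
  and rg_cmp [simp]: "a \<in> Mor C \<Longrightarrow> b \<in> Mor C \<Longrightarrow> sc C a = rg C b \<Longrightarrow> rg C (cmp C a b) = rg C a"
  and sc_cmp [simp]: "a \<in> Mor C \<Longrightarrow> b \<in> Mor C \<Longrightarrow> sc C a = rg C b \<Longrightarrow> sc C (cmp C a b) = sc C b"
  and cmp_rg [simp]: "a \<in> Mor C \<Longrightarrow> cmp C (rg C a) a = a"
  and cmp_sc [simp]: "a \<in> Mor C \<Longrightarrow> cmp C a (sc C a) = a"
  using small_category unfolding small_category_def by blast+

lemma cmp_assoc:
  "a \<in> Mor C \<Longrightarrow> b \<in> Mor C \<Longrightarrow> c \<in> Mor C \<Longrightarrow> sc C a = rg C b \<Longrightarrow> sc C b = rg C c \<Longrightarrow>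
   cmp C (cmp C a b) c = cmp C a (cmp C b c)"
  using small_category unfolding small_category_def by blast

lemma cmp_left_cancel:
  "a \<in> Mor C \<Longrightarrow> b \<in> Mor C \<Longrightarrow> c \<in> Mor C \<Longrightarrow> sc C a = rg C b \<Longrightarrow> sc C a = rg C c \<Longrightarrow>
   cmp C a b = cmp C a c \<longleftrightarrow> b = c"
  using left_cancellative unfolding left_cancellative_def by blast

lemma sc_eq_if_cmp_eq:
  assumes "a \<in> Mor C" "b \<in> Mor C" "p \<in> Mor C" "q \<in> Mor C" "rg C p = sc C a" "rg C q = sc C b"
    and "cmp C a p = cmp C b q"
  shows "sc C p = sc C q"
  using sc_cmp[OF assms(1,3) assms(5)[symmetric]] sc_cmp[OF assms(2,4) assms(6)[symmetric]] assms(7) by simp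

lemma rideal_iff: "y \<in> rideal C a \<longleftrightarrow> (\<exists>b. b \<in> Mor C \<and> sc C a = rg C b \<and> y = cmp C a b)"
  unfolding rideal_def by auto

lemma rideal_self: "a \<in> Mor C \<Longrightarrow> a \<in> rideal C a"
  unfolding rideal_iff by (rule exI[of _ "sc C a"]) auto

lemma rideal_obj:
  assumes "x \<in> Obj C"
  shows "rideal C x = {b \<in> Mor C. rg C b = x}"
proof (intro set_eqI iffI)
  fix y assume "y \<in> rideal C x"
  with assms show "y \<in> {b \<in> Mor C. rg C b = x}"
    unfolding rideal_iff using obj_mor sc_obj_eq by auto
next
  fix y assume "y \<in> {b \<in> Mor C. rg C b = x}"
  with assms show "y \<in> rideal C x"
    unfolding rideal_iff using sc_obj_eq by (intro exI[of _ y]) auto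
qed

lemma rideal_cmp_subset:
  assumes "a \<in> Mor C" "b \<in> Mor C" "sc C a = rg C b"
  shows "rideal C (cmp C a b) \<subseteq> rideal C a"
proof
  fix y assume "y \<in> rideal C (cmp C a b)"
  then obtain t where "t \<in> Mor C" "sc C b = rg C t" "y = cmp C (cmp C a b) t"
    using assms unfolding rideal_iff by auto
  with assms show "y \<in> rideal C a"
    unfolding rideal_iff by (intro exI[of _ "cmp C b t"]) (simp add: cmp_assoc)
qed

lemma pmap_Some: "pmap C a g = Some h \<longleftrightarrow> g \<in> Mor C \<and> rg C g = sc C a \<and> h = cmp C a g"
  unfolding pmap_def by auto

lemma dom_pmap: "dom (pmap C a) = {g \<in> Mor C. rg C g = sc C a}"
  unfolding pmap_def dom_def by auto

lemma inj_on_dom_pmap: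
  assumes "a \<in> Mor C"
  shows "inj_on (pmap C a) (dom (pmap C a))"
proof (rule inj_on_domI)
  fix g g' h assume "pmap C a g = Some h" "pmap C a g' = Some h"
  then have "g \<in> Mor C" "g' \<in> Mor C" "sc C a = rg C g" "sc C a = rg C g'" "cmp C a g = cmp C a g'"
    unfolding pmap_Some by simp_all
  with assms cmp_left_cancel[of a g g'] show "g = g'" by blast
qed

lemma pinv_pmap_Some:
  "a \<in> Mor C \<Longrightarrow> pinv (pmap C a) y = Some g \<longleftrightarrow> g \<in> Mor C \<and> rg C g = sc C a \<and> y = cmp C a g"
  by (simp add: pinv_Some_iff inj_on_dom_pmap pmap_Some)

lemma pmap_comp_pinv_pmap_Some:
  assumes "p \<in> Mor C" "q \<in> Mor C" "sc C p = sc C q"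
  shows "(pmap C p \<circ>\<^sub>m pinv (pmap C q)) x = Some z \<longleftrightarrow>
    (\<exists>u. u \<in> Mor C \<and> rg C u = sc C q \<and> x = cmp C q u \<and> z = cmp C p u)"
  using assms by (auto simp: map_comp_Some_iff pinv_pmap_Some pmap_Some)

lemma dom_pmap_comp_pinv_pmap:
  assumes "p \<in> Mor C" "q \<in> Mor C" "sc C p = sc C q"
  shows "dom (pmap C p \<circ>\<^sub>m pinv (pmap C q)) = rideal C q"
proof (rule set_eqI)
  fix x
  have "x \<in> dom (pmap C p \<circ>\<^sub>m pinv (pmap C q)) \<longleftrightarrow> (\<exists>z. (pmap C p \<circ>\<^sub>m pinv (pmap C q)) x = Some z)"
    by blast
  also have "\<dots> \<longleftrightarrow> x \<in> rideal C q"
    unfolding pmap_comp_pinv_pmap_Some[OF assms] rideal_iff by auto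
  finally show "x \<in> dom (pmap C p \<circ>\<^sub>m pinv (pmap C q)) \<longleftrightarrow> x \<in> rideal C q" .
qed

lemma pmap_comp_pinv_pmap_self_Some:
  assumes "d \<in> Mor C"
  shows "(pmap C d \<circ>\<^sub>m pinv (pmap C d)) x = Some z \<longleftrightarrow> z = x \<and> x \<in> rideal C d"
  unfolding pmap_comp_pinv_pmap_Some[OF assms assms refl] rideal_iff by auto

lemma pinv_pmap_comp_pmap_Some:
  assumes "a \<in> Mor C" "b \<in> Mor C"
  shows "(pinv (pmap C a) \<circ>\<^sub>m pmap C b) x = Some z \<longleftrightarrow>
    x \<in> Mor C \<and> rg C x = sc C b \<and> z \<in> Mor C \<and> rg C z = sc C a \<and> cmp C b x = cmp C a z"
  using assms by (auto simp: map_comp_Some_iff pinv_pmap_Some pmap_Some)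

lemma pinv_pmap_comp_pmap_cmp:
  assumes "a \<in> Mor C" "b \<in> Mor C" "sc C a = rg C b"
  shows "pinv (pmap C a) \<circ>\<^sub>m pmap C (cmp C a b) = pmap C b"
proof (rule ext)
  fix x
  show "(pinv (pmap C a) \<circ>\<^sub>m pmap C (cmp C a b)) x = pmap C b x"
  proof (cases "x \<in> Mor C \<and> rg C x = sc C b")
    case True
    then have "pmap C (cmp C a b) x = Some (cmp C a (cmp C b x))"
      using assms by (simp add: pmap_Some cmp_assoc)
    moreover have "pinv (pmap C a) (cmp C a (cmp C b x)) = Some (cmp C b x)"
      using assms True by (simp add: pinv_pmap_Some)
    ultimately show ?thesis using True by (simp add: pmap_def)
  next
    case False
    then show ?thesis using assms by (simp add: pmap_def)
  qed
qed

lemma pinv_pmap_cmp_comp_pmap: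
  assumes "a \<in> Mor C" "b \<in> Mor C" "sc C a = rg C b"
  shows "pinv (pmap C (cmp C a b)) \<circ>\<^sub>m pmap C a = pinv (pmap C b)"
proof (rule map_eqI_Some)
  have ab: "cmp C a b \<in> Mor C" using assms by simp
  fix w z
  show "(pinv (pmap C (cmp C a b)) \<circ>\<^sub>m pmap C a) w = Some z \<longleftrightarrow> pinv (pmap C b) w = Some z"
  proof
    assume "(pinv (pmap C (cmp C a b)) \<circ>\<^sub>m pmap C a) w = Some z"
    then have w: "w \<in> Mor C" "rg C w = sc C a" and z: "z \<in> Mor C" "rg C z = sc C (cmp C a b)"
      and eq: "cmp C a w = cmp C (cmp C a b) z"
      unfolding pinv_pmap_comp_pmap_Some[OF ab assms(1)] by blast+
    have zb: "rg C z = sc C b" using z(2) assms by simp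
    with eq assms z(1) have "cmp C a w = cmp C a (cmp C b z)" by (simp add: cmp_assoc)
    with w assms z(1) zb have "w = cmp C b z" using cmp_left_cancel[of a w "cmp C b z"] by simp
    with z(1) zb assms(2) show "pinv (pmap C b) w = Some z" by (simp add: pinv_pmap_Some)
  next
    assume "pinv (pmap C b) w = Some z"
    then have z: "z \<in> Mor C" "rg C z = sc C b" "w = cmp C b z"
      using assms(2) by (simp_all add: pinv_pmap_Some)
    then show "(pinv (pmap C (cmp C a b)) \<circ>\<^sub>m pmap C a) w = Some z"
      unfolding pinv_pmap_comp_pmap_Some[OF ab assms(1)] using assms by (simp add: cmp_assoc)
  qed
qed

lemma S_Lambda_inj_on_dom: "s \<in> S_Lambda C \<Longrightarrow> inj_on s (dom s)"
  by (induction rule: S_Lambda.induct) (simp_all add: inj_on_dom_pmap inj_on_dom_map_comp inj_on_dom_pinv)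

definition right_equivariant :: "('a \<rightharpoonup> 'a) \<Rightarrow> bool" where
  "right_equivariant s \<longleftrightarrow> (\<forall>x y. s x = Some y \<longrightarrow> x \<in> Mor C \<and> y \<in> Mor C \<and> sc C x = sc C y \<and>
     (\<forall>t\<in>Mor C. rg C t = sc C x \<longrightarrow> s (cmp C x t) = Some (cmp C y t)))"

lemma S_Lambda_right_equivariant: "s \<in> S_Lambda C \<Longrightarrow> right_equivariant s"
proof (induction rule: S_Lambda.induct)
  case (gen a)
  show ?case unfolding right_equivariant_def
  proof (intro allI impI conjI ballI)
    fix x y assume "pmap C a x = Some y"
    then have x: "x \<in> Mor C" "rg C x = sc C a" and y: "y = cmp C a x" unfolding pmap_Some by simp_all
    with gen show "x \<in> Mor C" "y \<in> Mor C" "sc C x = sc C y" by simp_all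
    fix t assume "t \<in> Mor C" "rg C t = sc C x"
    with gen x y show "pmap C a (cmp C x t) = Some (cmp C y t)" by (simp add: pmap_Some cmp_assoc)
  qed
next
  case (mult s t)
  show ?case unfolding right_equivariant_def
  proof (intro allI impI conjI ballI)
    fix x y assume "(s \<circ>\<^sub>m t) x = Some y"
    then obtain k where k: "t x = Some k" "s k = Some y" by (auto simp: map_comp_Some_iff)
    with mult.IH show "x \<in> Mor C" "y \<in> Mor C" "sc C x = sc C y"
      unfolding right_equivariant_def by metis+
    fix u assume "u \<in> Mor C" "rg C u = sc C x"
    with k mult.IH show "(s \<circ>\<^sub>m t) (cmp C x u) = Some (cmp C y u)"
      unfolding right_equivariant_def by (simp add: map_comp_def)
  qed
next
  case (inv s)
  show ?case unfolding right_equivariant_def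
  proof (intro allI impI conjI ballI)
    fix x y assume "pinv s x = Some y"
    then have "s y = Some x" by (rule pinv_SomeD)
    with inv.IH have y: "y \<in> Mor C" "x \<in> Mor C" "sc C y = sc C x"
      and shift: "\<And>t. t \<in> Mor C \<Longrightarrow> rg C t = sc C y \<Longrightarrow> s (cmp C y t) = Some (cmp C x t)"
      unfolding right_equivariant_def by blast+
    then show "x \<in> Mor C" "y \<in> Mor C" "sc C x = sc C y" by simp_all
    fix t assume "t \<in> Mor C" "rg C t = sc C x"
    with y shift have "s (cmp C y t) = Some (cmp C x t)" by simp
    then show "pinv s (cmp C x t) = Some (cmp C y t)"
      using S_Lambda_inj_on_dom[OF inv.hyps] by (simp add: pinv_Some_iff)
  qed
qed

definition returns_to :: "('a \<rightharpoonup> 'a) \<Rightarrow> 'a \<Rightarrow> bool" where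
  "returns_to s y \<longleftrightarrow> (\<exists>x\<in>rideal C y. \<exists>z\<in>rideal C y. s x = Some z)"

lemma S_Iso_returns_to:
  assumes "s \<in> S_Iso C" "d \<in> Mor C" "rideal C d \<subseteq> dom s"
  shows "returns_to s d"
proof -
  define e where "e = pmap C d \<circ>\<^sub>m pinv (pmap C d)"
  have s: "s \<in> S_Lambda C"
    and iso: "\<And>e. e \<in> S_Lambda C \<Longrightarrow> e \<circ>\<^sub>m e = e \<Longrightarrow> e \<noteq> Map.empty \<Longrightarrow>
      e = e \<circ>\<^sub>m (pinv s \<circ>\<^sub>m s) \<Longrightarrow> s \<circ>\<^sub>m e \<circ>\<^sub>m pinv s \<circ>\<^sub>m e \<noteq> Map.empty"
    using assms(1) unfolding S_Iso_def by blast+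
  have e_Some: "e x = Some z \<longleftrightarrow> z = x \<and> x \<in> rideal C d" for x z
    unfolding e_def by (rule pmap_comp_pinv_pmap_self_Some[OF assms(2)])
  have "e \<in> S_Lambda C" unfolding e_def using assms(2) by (intro S_Lambda.intros)
  moreover have "e \<circ>\<^sub>m e = e"
    by (rule map_eqI_Some) (auto simp: map_comp_Some_iff e_Some)
  moreover have "e d = Some d" using e_Some rideal_self[OF assms(2)] by simp
  then have "e \<noteq> Map.empty" by auto
  moreover have "e = e \<circ>\<^sub>m (pinv s \<circ>\<^sub>m s)"
    using assms(3) by (intro map_eqI_Some)
      (auto simp: map_comp_Some_iff e_Some pinv_comp_self[OF S_Lambda_inj_on_dom[OF s]])
  ultimately have "s \<circ>\<^sub>m e \<circ>\<^sub>m pinv s \<circ>\<^sub>m e \<noteq> Map.empty" by (rule iso)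
  then obtain x v where "(s \<circ>\<^sub>m e \<circ>\<^sub>m pinv s \<circ>\<^sub>m e) x = Some v" by (rule map_nonemptyE)
  then obtain k where "x \<in> rideal C d" "pinv s x = Some k" "k \<in> rideal C d"
    by (auto simp: map_comp_Some_iff e_Some)
  then show ?thesis unfolding returns_to_def by (blast dest: pinv_SomeD)
qed

lemma S_IsoI:
  assumes "s \<in> S_Lambda C" and "\<And>y. y \<in> dom s \<Longrightarrow> returns_to s y"
  shows "s \<in> S_Iso C"
  unfolding S_Iso_def
proof (intro CollectI conjI assms(1) allI impI)
  fix e assume "e \<in> S_Lambda C \<and> e \<circ>\<^sub>m e = e \<and> e \<noteq> Map.empty \<and> e = e \<circ>\<^sub>m (pinv s \<circ>\<^sub>m s)"
  then have e: "e \<in> S_Lambda C" "e \<circ>\<^sub>m e = e" "e \<noteq> Map.empty"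
    and e_below: "e = e \<circ>\<^sub>m (pinv s \<circ>\<^sub>m s)" by blast+
  obtain y y' where "e y = Some y'" using e(3) by (rule map_nonemptyE)
  with idempotent_map_fixes[OF S_Lambda_inj_on_dom[OF e(1)] e(2)] have ey: "e y = Some y" by blast
  then have "(e \<circ>\<^sub>m (pinv s \<circ>\<^sub>m s)) y = Some y" using e_below by simp
  then have "(pinv s \<circ>\<^sub>m s) y \<noteq> None" by (auto simp: map_comp_def split: option.splits)
  then have "y \<in> dom s" using pinv_comp_self[OF S_Lambda_inj_on_dom[OF assms(1)], of y] by presburger
  then obtain x z where x: "x \<in> rideal C y" and z: "z \<in> rideal C y" and sxz: "s x = Some z"
    using assms(2) unfolding returns_to_def by blast
  have shift: "e (cmp C y t) = Some (cmp C y t)" if "t \<in> Mor C" "rg C t = sc C y" for t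
    using that ey S_Lambda_right_equivariant[OF e(1)] unfolding right_equivariant_def by blast
  have e_fixes: "e w = Some w" if "w \<in> rideal C y" for w
  proof -
    from that obtain t where "t \<in> Mor C" "sc C y = rg C t" "w = cmp C y t" unfolding rideal_iff by blast
    with shift show ?thesis by simp
  qed
  have "pinv s z = Some x" using sxz S_Lambda_inj_on_dom[OF assms(1)] by (simp add: pinv_Some_iff)
  then have "(s \<circ>\<^sub>m e \<circ>\<^sub>m pinv s \<circ>\<^sub>m e) z = Some z"
    using e_fixes[OF x] e_fixes[OF z] sxz by (simp add: map_comp_def)
  then show "s \<circ>\<^sub>m e \<circ>\<^sub>m pinv s \<circ>\<^sub>m e \<noteq> Map.empty" by auto
qed

lemma conjugate_returns_to:
  assumes "s \<in> S_Iso C" "\<delta> \<in> Mor C" "rideal C \<delta> \<subseteq> dom s" "y \<in> Mor C" "rg C y = sc C \<delta>"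
  shows "returns_to (pinv (pmap C \<delta>) \<circ>\<^sub>m s \<circ>\<^sub>m pmap C \<delta>) y"
proof -
  have dy: "cmp C \<delta> y \<in> Mor C" "sc C (cmp C \<delta> y) = sc C y" using assms(2,4,5) by simp_all
  have "rideal C (cmp C \<delta> y) \<subseteq> dom s"
    using rideal_cmp_subset[OF assms(2,4)] assms(3,5) by auto
  then obtain u v where "u \<in> rideal C (cmp C \<delta> y)" "v \<in> rideal C (cmp C \<delta> y)" and suv: "s u = Some v"
    using S_Iso_returns_to[OF assms(1) dy(1)] unfolding returns_to_def by blast
  then obtain t t' where t: "t \<in> Mor C" "rg C t = sc C y" "v = cmp C (cmp C \<delta> y) t"
    and t': "t' \<in> Mor C" "rg C t' = sc C y" "u = cmp C (cmp C \<delta> y) t'"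
    unfolding rideal_iff dy(2) by metis
  have u: "pmap C \<delta> (cmp C y t') = Some u"
    using assms(2,4,5) t' by (simp add: pmap_Some cmp_assoc)
  have v: "pinv (pmap C \<delta>) v = Some (cmp C y t)"
    using assms(2,4,5) t by (simp add: pinv_pmap_Some cmp_assoc)
  have "cmp C y t' \<in> rideal C y" "cmp C y t \<in> rideal C y"
    unfolding rideal_iff using t t' by auto
  moreover have "(pinv (pmap C \<delta>) \<circ>\<^sub>m s \<circ>\<^sub>m pmap C \<delta>) (cmp C y t') = Some (cmp C y t)"
    using u suv v by (simp add: map_comp_def)
  ultimately show ?thesis unfolding returns_to_def by blast
qed

lemma S_Iso_conjugate:
  assumes "s \<in> S_Iso C" "\<delta> \<in> Mor C" "rideal C \<delta> \<subseteq> dom s"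
  shows "pinv (pmap C \<delta>) \<circ>\<^sub>m s \<circ>\<^sub>m pmap C \<delta> \<in> S_Iso C"
proof (rule S_IsoI)
  have "s \<in> S_Lambda C" using assms(1) unfolding S_Iso_def by blast
  with assms(2) show "pinv (pmap C \<delta>) \<circ>\<^sub>m s \<circ>\<^sub>m pmap C \<delta> \<in> S_Lambda C"
    by (intro S_Lambda.intros)
next
  fix y assume "y \<in> dom (pinv (pmap C \<delta>) \<circ>\<^sub>m s \<circ>\<^sub>m pmap C \<delta>)"
  then have "y \<in> dom (pmap C \<delta>)" by (auto simp: map_comp_def split: option.splits)
  then show "returns_to (pinv (pmap C \<delta>) \<circ>\<^sub>m s \<circ>\<^sub>m pmap C \<delta>) y"
    using conjugate_returns_to[OF assms] unfolding dom_pmap by blast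
qed

lemma conjugate_eq_pinv_pmap_comp_pmap:
  assumes "\<alpha> \<in> Mor C" "\<beta> \<in> Mor C" "a \<in> Mor C" "b \<in> Mor C" "sc C \<alpha> = rg C a" "sc C \<beta> = rg C b"
    and "\<delta> = cmp C \<alpha> a" "\<delta> = cmp C \<beta> b"
  shows "pinv (pmap C \<delta>) \<circ>\<^sub>m pmap C \<alpha> \<circ>\<^sub>m pinv (pmap C \<beta>) \<circ>\<^sub>m pmap C \<delta> = pinv (pmap C a) \<circ>\<^sub>m pmap C b"
proof -
  have "pinv (pmap C \<delta>) \<circ>\<^sub>m pmap C \<alpha> = pinv (pmap C a)"
    using pinv_pmap_cmp_comp_pmap assms(1,3,5,7) by simp
  moreover have "pinv (pmap C \<beta>) \<circ>\<^sub>m pmap C \<delta> = pmap C b"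
    using pinv_pmap_comp_pmap_cmp assms(2,4,6,8) by simp
  ultimately show ?thesis by (simp flip: map_comp_assoc)
qed

lemma finitely_aligned_common_extensions:
  assumes "finitely_aligned C" "a \<in> Mor C" "b \<in> Mor C"
  obtains n :: nat and ps qs :: "nat \<Rightarrow> 'a" where
    "\<And>i. i < n \<Longrightarrow> ps i \<in> Mor C \<and> qs i \<in> Mor C \<and> rg C (ps i) = sc C a \<and> rg C (qs i) = sc C b \<and>
       cmp C a (ps i) = cmp C b (qs i)"
    and "rideal C a \<inter> rideal C b = (\<Union>i<n. rideal C (cmp C a (ps i)))"
proof -
  have "\<exists>F. finite F \<and> F \<subseteq> Mor C \<and> rideal C a \<inter> rideal C b = (\<Union>f\<in>F. rideal C f)"
    using assms unfolding finitely_aligned_def by simp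
  then obtain F where F: "finite F" "F \<subseteq> Mor C" and span: "rideal C a \<inter> rideal C b = (\<Union>f\<in>F. rideal C f)"
    by blast
  obtain n :: nat and g where g: "F = g ` {..<n}"
    using finite_imp_nat_seg_image_inj_on[OF F(1)] unfolding lessThan_def by (elim exE conjE)
  have inter: "f \<in> rideal C a \<and> f \<in> rideal C b" if "f \<in> F" for f
  proof -
    have "f \<in> (\<Union>f\<in>F. rideal C f)" using that F(2) rideal_self by blast
    then show ?thesis unfolding span[symmetric] by blast
  qed
  have "\<forall>f\<in>F. \<exists>p. p \<in> Mor C \<and> rg C p = sc C a \<and> cmp C a p = f"
    using inter unfolding rideal_iff by fastforce
  from bchoice[OF this] obtain p
    where p: "\<And>f. f \<in> F \<Longrightarrow> p f \<in> Mor C \<and> rg C (p f) = sc C a \<and> cmp C a (p f) = f" by blast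
  have "\<forall>f\<in>F. \<exists>q. q \<in> Mor C \<and> rg C q = sc C b \<and> cmp C b q = f"
    using inter unfolding rideal_iff by fastforce
  from bchoice[OF this] obtain q
    where q: "\<And>f. f \<in> F \<Longrightarrow> q f \<in> Mor C \<and> rg C (q f) = sc C b \<and> cmp C b (q f) = f" by blast
  show ?thesis
  proof (rule that[of n "\<lambda>i. p (g i)" "\<lambda>i. q (g i)"])
    fix i assume "i < n"
    then have "g i \<in> F" using g by blast
    with p q show "p (g i) \<in> Mor C \<and> q (g i) \<in> Mor C \<and> rg C (p (g i)) = sc C a \<and>
      rg C (q (g i)) = sc C b \<and> cmp C a (p (g i)) = cmp C b (q (g i))"
      by simp
  next
    have "cmp C a (p (g i)) = g i" if "i < n" for i using that g p by blast
    then show "rideal C a \<inter> rideal C b = (\<Union>i<n. rideal C (cmp C a (p (g i))))"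
      unfolding span g by simp
  qed
qed

lemma pgraph_pinv_pmap_comp_pmap:
  assumes "a \<in> Mor C" "b \<in> Mor C"
    and ext: "\<And>i. i < n \<Longrightarrow> ps i \<in> Mor C \<and> qs i \<in> Mor C \<and> rg C (ps i) = sc C a \<and> rg C (qs i) = sc C b \<and>
       cmp C a (ps i) = cmp C b (qs i)"
    and span: "rideal C a \<inter> rideal C b = (\<Union>i<n. rideal C (cmp C a (ps i)))"
  shows "pgraph (pinv (pmap C a) \<circ>\<^sub>m pmap C b) = (\<Union>i<n. pgraph (pmap C (ps i) \<circ>\<^sub>m pinv (pmap C (qs i))))"
proof -
  have ps: "ps i \<in> Mor C" "rg C (ps i) = sc C a" and qs: "qs i \<in> Mor C" "rg C (qs i) = sc C b"
    and ab: "cmp C a (ps i) = cmp C b (qs i)" if "i < n" for i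
    using ext[OF that] by simp_all
  have sc_eq: "sc C (ps i) = sc C (qs i)" if "i < n" for i
    using sc_eq_if_cmp_eq[OF assms(1,2) ps(1)[OF that] qs(1)[OF that] ps(2)[OF that] qs(2)[OF that] ab[OF that]] .
  have assoc_a: "cmp C (cmp C a (ps i)) u = cmp C a (cmp C (ps i) u)"
    and assoc_b: "cmp C (cmp C a (ps i)) u = cmp C b (cmp C (qs i) u)"
    if "i < n" "u \<in> Mor C" "rg C u = sc C (ps i)" for i u
  proof -
    show "cmp C (cmp C a (ps i)) u = cmp C a (cmp C (ps i) u)"
      using that ps[OF that(1)] assms(1) by (simp add: cmp_assoc)
    have "cmp C (cmp C b (qs i)) u = cmp C b (cmp C (qs i) u)"
      using that qs[OF that(1)] sc_eq[OF that(1)] assms(2) by (simp add: cmp_assoc)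
    with ab[OF that(1)] show "cmp C (cmp C a (ps i)) u = cmp C b (cmp C (qs i) u)" by simp
  qed
  have piece: "(pmap C (ps i) \<circ>\<^sub>m pinv (pmap C (qs i))) x = Some z \<longleftrightarrow>
      (\<exists>u. u \<in> Mor C \<and> rg C u = sc C (ps i) \<and> x = cmp C (qs i) u \<and> z = cmp C (ps i) u)"
    if "i < n" for i x z
    using pmap_comp_pinv_pmap_Some[OF ps(1)[OF that] qs(1)[OF that] sc_eq[OF that]] sc_eq[OF that] by simp
  show ?thesis
  proof (intro equalityI subsetI)
    fix xz assume "xz \<in> pgraph (pinv (pmap C a) \<circ>\<^sub>m pmap C b)"
    then obtain x z where xz: "xz = (x, z)" and x: "x \<in> Mor C" "rg C x = sc C b"
      and z: "z \<in> Mor C" "rg C z = sc C a" and eq: "cmp C b x = cmp C a z"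
      unfolding pgraph_def pinv_pmap_comp_pmap_Some[OF assms(1,2)] by blast
    have "cmp C a z \<in> rideal C a" unfolding rideal_iff using z by auto
    moreover have "cmp C a z \<in> rideal C b" unfolding rideal_iff using x eq by auto
    ultimately have "cmp C a z \<in> rideal C a \<inter> rideal C b" by blast
    then obtain i where i: "i < n" and "cmp C a z \<in> rideal C (cmp C a (ps i))"
      unfolding span by blast
    then obtain u where u: "u \<in> Mor C" "sc C (cmp C a (ps i)) = rg C u"
      and az: "cmp C a z = cmp C (cmp C a (ps i)) u"
      unfolding rideal_iff by blast
    have ru: "rg C u = sc C (ps i)"
      using u(2) sc_cmp[OF assms(1) ps(1)[OF i] ps(2)[OF i, symmetric]] by simp
    have pu: "cmp C (ps i) u \<in> Mor C" "sc C a = rg C (cmp C (ps i) u)"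
      using ps[OF i] u(1) ru by simp_all
    have qu: "cmp C (qs i) u \<in> Mor C" "sc C b = rg C (cmp C (qs i) u)"
      using qs[OF i] u(1) ru sc_eq[OF i] by simp_all
    have "cmp C a z = cmp C a (cmp C (ps i) u)" using trans[OF az assoc_a[OF i u(1) ru]] .
    then have z_eq: "z = cmp C (ps i) u"
      using cmp_left_cancel[OF assms(1) z(1) pu(1) z(2)[symmetric] pu(2)] by blast
    have "cmp C b x = cmp C b (cmp C (qs i) u)" using trans[OF eq trans[OF az assoc_b[OF i u(1) ru]]] .
    then have x_eq: "x = cmp C (qs i) u"
      using cmp_left_cancel[OF assms(2) x(1) qu(1) x(2)[symmetric] qu(2)] by blast
    show "xz \<in> (\<Union>i<n. pgraph (pmap C (ps i) \<circ>\<^sub>m pinv (pmap C (qs i))))"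
      unfolding xz pgraph_def using i piece[OF i] u(1) ru x_eq z_eq by blast
  next
    fix xz assume "xz \<in> (\<Union>i<n. pgraph (pmap C (ps i) \<circ>\<^sub>m pinv (pmap C (qs i))))"
    then obtain i x z where i: "i < n" and xz: "xz = (x, z)"
      and "(pmap C (ps i) \<circ>\<^sub>m pinv (pmap C (qs i))) x = Some z"
      unfolding pgraph_def by blast
    then obtain u where u: "u \<in> Mor C" "rg C u = sc C (ps i)" and x: "x = cmp C (qs i) u"
      and z: "z = cmp C (ps i) u"
      using piece by blast
    have "cmp C b x = cmp C a z" using assoc_a[OF i u] assoc_b[OF i u] x z by simp
    then show "xz \<in> pgraph (pinv (pmap C a) \<circ>\<^sub>m pmap C b)"
      unfolding xz pgraph_def using pinv_pmap_comp_pmap_Some[OF assms(1,2)] u x z ps[OF i] qs[OF i] sc_eq[OF i]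
      by simp
  qed
qed

lemma exhaustive_if_returns_to:
  assumes "x \<in> Obj C"
    and fam: "\<And>i. i < n \<Longrightarrow> ps i \<in> Mor C \<and> qs i \<in> Mor C \<and> rg C (ps i) = x \<and> rg C (qs i) = x \<and>
       sc C (ps i) = sc C (qs i)"
    and graph: "pgraph m = (\<Union>i<n. pgraph (pmap C (ps i) \<circ>\<^sub>m pinv (pmap C (qs i))))"
    and returns: "\<And>y. y \<in> rideal C x \<Longrightarrow> returns_to m y"
  shows "exhaustive C (ps ` {..<n}) \<and> exhaustive C (qs ` {..<n})"
proof -
  have meets: "\<exists>i<n. rideal C y \<inter> rideal C (ps i) \<noteq> {} \<and> rideal C y \<inter> rideal C (qs i) \<noteq> {}"
    if y: "y \<in> rideal C x" for y
  proof -
    obtain u v where uv: "u \<in> rideal C y" "v \<in> rideal C y" "m u = Some v"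
      using returns[OF y] unfolding returns_to_def by blast
    then have "(u, v) \<in> pgraph m" unfolding pgraph_def by simp
    then have "(u, v) \<in> (\<Union>i<n. pgraph (pmap C (ps i) \<circ>\<^sub>m pinv (pmap C (qs i))))"
      unfolding graph .
    then obtain i where i: "i < n" and "(pmap C (ps i) \<circ>\<^sub>m pinv (pmap C (qs i))) u = Some v"
      unfolding pgraph_def by blast
    moreover have psi: "ps i \<in> Mor C" "qs i \<in> Mor C" "sc C (ps i) = sc C (qs i)" using fam[OF i] by simp_all
    ultimately obtain w where w: "w \<in> Mor C" "rg C w = sc C (qs i)" "u = cmp C (qs i) w" "v = cmp C (ps i) w"
      unfolding pmap_comp_pinv_pmap_Some[OF psi] by blast
    have "v \<in> rideal C (ps i)" "u \<in> rideal C (qs i)"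
      unfolding rideal_iff using w psi(3) by (intro exI[of _ w]; simp)+
    with uv i show ?thesis by blast
  qed
  have "exhaustive C (f ` {..<n})"
    if "\<And>i. i < n \<Longrightarrow> f i \<in> Mor C \<and> rg C (f i) = x"
      and "\<And>y. y \<in> rideal C x \<Longrightarrow> \<exists>i<n. rideal C y \<inter> rideal C (f i) \<noteq> {}" for f
  proof -
    have "exhaustive_at C x (f ` {..<n})"
      unfolding exhaustive_at_def using that unfolding rideal_obj[OF assms(1)] by blast
    with assms(1) show ?thesis unfolding exhaustive_def by blast
  qed
  then show ?thesis using fam meets by (metis (no_types, lifting))
qed

lemma conjugate_decomposition:
  assumes "finitely_aligned C" "\<alpha> \<in> Mor C" "\<beta> \<in> Mor C" "\<delta> \<in> Mor C"
    and "rideal C \<delta> \<subseteq> rideal C \<alpha> \<inter> rideal C \<beta>"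
  obtains n :: nat and ps qs :: "nat \<Rightarrow> 'a" where
    "\<And>i. i < n \<Longrightarrow> ps i \<in> Mor C \<and> qs i \<in> Mor C \<and> rg C (ps i) = sc C \<delta> \<and> rg C (qs i) = sc C \<delta> \<and>
       sc C (ps i) = sc C (qs i)"
    and "pgraph (pinv (pmap C \<delta>) \<circ>\<^sub>m pmap C \<alpha> \<circ>\<^sub>m pinv (pmap C \<beta>) \<circ>\<^sub>m pmap C \<delta>)
      = (\<Union>i<n. pgraph (pmap C (ps i) \<circ>\<^sub>m pinv (pmap C (qs i))))"
proof -
  have "\<delta> \<in> rideal C \<alpha> \<inter> rideal C \<beta>" using assms(5) rideal_self[OF assms(4)] ..
  then obtain a b where a: "a \<in> Mor C" "sc C \<alpha> = rg C a" "\<delta> = cmp C \<alpha> a"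
    and b: "b \<in> Mor C" "sc C \<beta> = rg C b" "\<delta> = cmp C \<beta> b"
    unfolding Int_iff rideal_iff by blast
  have sc_\<delta>: "sc C a = sc C \<delta>" "sc C b = sc C \<delta>"
    using sc_cmp[OF assms(2) a(1,2)] sc_cmp[OF assms(3) b(1,2)] a(3) b(3) by simp_all
  obtain n :: nat and ps qs where ext: "\<And>i. i < n \<Longrightarrow> ps i \<in> Mor C \<and> qs i \<in> Mor C \<and>
      rg C (ps i) = sc C a \<and> rg C (qs i) = sc C b \<and> cmp C a (ps i) = cmp C b (qs i)"
    and span: "rideal C a \<inter> rideal C b = (\<Union>i<n. rideal C (cmp C a (ps i)))"
    using finitely_aligned_common_extensions[OF assms(1) a(1) b(1)] by blast
  show ?thesis
  proof (rule that)
    fix i assume "i < n"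
    then have "ps i \<in> Mor C" "qs i \<in> Mor C" "rg C (ps i) = sc C a" "rg C (qs i) = sc C b"
      and "cmp C a (ps i) = cmp C b (qs i)" using ext by simp_all
    with sc_eq_if_cmp_eq[OF a(1) b(1)] sc_\<delta> show "ps i \<in> Mor C \<and> qs i \<in> Mor C \<and>
      rg C (ps i) = sc C \<delta> \<and> rg C (qs i) = sc C \<delta> \<and> sc C (ps i) = sc C (qs i)"
      by simp
  next
    show "pgraph (pinv (pmap C \<delta>) \<circ>\<^sub>m pmap C \<alpha> \<circ>\<^sub>m pinv (pmap C \<beta>) \<circ>\<^sub>m pmap C \<delta>)
      = (\<Union>i<n. pgraph (pmap C (ps i) \<circ>\<^sub>m pinv (pmap C (qs i))))"
      unfolding conjugate_eq_pinv_pmap_comp_pmap[OF assms(2,3) a(1) b(1) a(2) b(2) a(3) b(3)]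
      by (rule pgraph_pinv_pmap_comp_pmap[OF a(1) b(1) ext span])
  qed
qed

end

theorem lemma4p9:
  fixes C :: "'a cat" and \<alpha> \<beta> \<delta> :: 'a
  assumes "small_category C" and "left_cancellative C" and "finitely_aligned C"
    and "\<alpha> \<in> Mor C" and "\<beta> \<in> Mor C" and "sc C \<alpha> = sc C \<beta>"
    and "pmap C \<alpha> \<circ>\<^sub>m pinv (pmap C \<beta>) \<in> S_Iso C"
    and "\<delta> \<in> Mor C" and "rideal C \<delta> \<subseteq> rideal C \<alpha> \<inter> rideal C \<beta>"
  shows "(\<exists>(n::nat) ds as. (\<forall>i<n. ds i \<in> Mor C \<and> as i \<in> Mor C) \<and>
            exhaustive C (ds ` {..<n}) \<and> exhaustive C (as ` {..<n}) \<and>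
            pgraph (pinv (pmap C \<delta>) \<circ>\<^sub>m pmap C \<alpha> \<circ>\<^sub>m pinv (pmap C \<beta>) \<circ>\<^sub>m pmap C \<delta>)
              = (\<Union>i<n. pgraph (pmap C (ds i) \<circ>\<^sub>m pinv (pmap C (as i)))))
         \<and> (pinv (pmap C \<delta>) \<circ>\<^sub>m pmap C \<alpha> \<circ>\<^sub>m pinv (pmap C \<beta>) \<circ>\<^sub>m pmap C \<delta>) \<in> F_Lambda C"
proof -
  interpret left_cancellative_category C using assms(1,2) by unfold_locales
  let ?m = "pinv (pmap C \<delta>) \<circ>\<^sub>m pmap C \<alpha> \<circ>\<^sub>m pinv (pmap C \<beta>) \<circ>\<^sub>m pmap C \<delta>"
  obtain n :: nat and ps qs where fam: "\<And>i. i < n \<Longrightarrow> ps i \<in> Mor C \<and> qs i \<in> Mor C \<and>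
      rg C (ps i) = sc C \<delta> \<and> rg C (qs i) = sc C \<delta> \<and> sc C (ps i) = sc C (qs i)"
    and graph: "pgraph ?m = (\<Union>i<n. pgraph (pmap C (ps i) \<circ>\<^sub>m pinv (pmap C (qs i))))"
    using conjugate_decomposition[OF assms(3,4,5,8,9)] by blast
  have "rideal C \<delta> \<subseteq> dom (pmap C \<alpha> \<circ>\<^sub>m pinv (pmap C \<beta>))"
    unfolding dom_pmap_comp_pinv_pmap[OF assms(4,5,6)] using assms(9) by blast
  note conjugate = assms(7,8) this
  have iso: "?m \<in> S_Iso C" using S_Iso_conjugate[OF conjugate] by (simp add: map_comp_assoc)
  have "returns_to ?m y" if "y \<in> rideal C (sc C \<delta>)" for y
    using that conjugate_returns_to[OF conjugate] unfolding rideal_obj[OF sc_obj[OF assms(8)]]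
    by (simp add: map_comp_assoc)
  with exhaustive_if_returns_to[OF sc_obj[OF assms(8)] fam graph]
  have "exhaustive C (ps ` {..<n}) \<and> exhaustive C (qs ` {..<n})" by blast
  with fam graph have "\<exists>(n::nat) ds as. (\<forall>i<n. ds i \<in> Mor C \<and> as i \<in> Mor C) \<and>
      exhaustive C (ds ` {..<n}) \<and> exhaustive C (as ` {..<n}) \<and>
      pgraph ?m = (\<Union>i<n. pgraph (pmap C (ds i) \<circ>\<^sub>m pinv (pmap C (as i))))"
    by (intro exI[of _ n] exI[of _ ps] exI[of _ qs]) simp
  with iso show ?thesis unfolding F_Lambda_def by blast
qed

end
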